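(* Let $H$ be the graph obtained from the complete bipartite graph $K_{4,4}$ by deleting a perfect matching. Then no bipartite graph $G=(A\cup B,E)$ containing $H$ as an induced subgraph admits a Stick representation with the vertices of $A$ as horizontal segments and those of $B$ as vertical segments. In particular, since $H$ is planar, not all planar bipartite graphs are Stick graphs.
   Context: A Stick representation of a bipartite graph $G=(A\cup B,E)$ (with $A$ horizontal and $B$ vertical) assigns to each vertex of $A$ a horizontal segment and to each vertex of $B$ a vertical segment such that the left endpoints of all horizontal segments and the bottom endpoints of all vertical segments lie on a fixed ground line $\ell$ of slope $-1$, and a horizontal and a vertical segment intersect if and only if the corresponding vertices are adjacent in $G$. A Stick graph is a bipartite graph admitting such a representation. *)

theory Defs
  imports "HOL-Analysis.Analysis"
begin

definition bipartite_graph :: "'v set \<Rightarrow> 'v set \<Rightarrow> ('v \<Rightarrow> 'v \<Rightarrow> bool) \<Rightarrow> bool" where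
  "bipartite_graph A B E \<longleftrightarrow>
     A \<inter> B = {} \<and> finite (A \<union> B) \<and>
     (\<forall>u v. E u v \<longrightarrow> E v u) \<and>
     (\<forall>u v. E u v \<longrightarrow> (u \<in> A \<and> v \<in> B) \<or> (u \<in> B \<and> v \<in> A))"

text \<open>Horizontal segment whose left endpoint lies on the ground line y = c - x,
  starting at abscissa l and ending at abscissa r (r \<ge> l).\<close>
definition hseg :: "real \<Rightarrow> real \<Rightarrow> real \<Rightarrow> (real \<times> real) set" where
  "hseg c l r = closed_segment (l, c - l) (r, c - l)"

text \<open>Vertical segment whose bottom endpoint lies on the ground line y = c - x,
  at abscissa x, with top at height t (t \<ge> c - x).\<close>
definition vseg :: "real \<Rightarrow> real \<Rightarrow> real \<Rightarrow> (real \<times> real) set" where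
  "vseg c x t = closed_segment (x, c - x) (x, t)"

definition stick_representation ::
  "'v set \<Rightarrow> 'v set \<Rightarrow> ('v \<Rightarrow> 'v \<Rightarrow> bool) \<Rightarrow> bool" where
  "stick_representation A B E \<longleftrightarrow>
     (\<exists>(c::real) (hl::'v \<Rightarrow> real) hr vx vt.
        (\<forall>a\<in>A. hl a \<le> hr a) \<and>
        (\<forall>b\<in>B. c - vx b \<le> vt b) \<and>
        (\<forall>a\<in>A. \<forall>b\<in>B. (hseg c (hl a) (hr a) \<inter> vseg c (vx b) (vt b) \<noteq> {}) \<longleftrightarrow> E a b))"

text \<open>The graph H = K_{4,4} minus a perfect matching: vertices Inl i, Inr j (i, j < 4),
  Inl i adjacent to Inr j iff i \<noteq> j.\<close>
definition H_verts :: "(nat + nat) set" where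
  "H_verts = Inl ` {..<4} \<union> Inr ` {..<4}"

definition H_adj :: "nat + nat \<Rightarrow> nat + nat \<Rightarrow> bool" where
  "H_adj u v \<longleftrightarrow>
     (\<exists>i j. i \<noteq> j \<and> ((u = Inl i \<and> v = Inr j) \<or> (u = Inr j \<and> v = Inl i)))"

definition contains_induced_H :: "'v set \<Rightarrow> ('v \<Rightarrow> 'v \<Rightarrow> bool) \<Rightarrow> bool" where
  "contains_induced_H V E \<longleftrightarrow>
     (\<exists>f. inj_on f H_verts \<and> f ` H_verts \<subseteq> V \<and>
          (\<forall>u\<in>H_verts. \<forall>v\<in>H_verts. E (f u) (f v) \<longleftrightarrow> H_adj u v))"

end

theory Submission
  imports Defs
begin

text \<open>Writing \<open>s b = c - vt b\<close> for the abscissa at which the ground line reaches the height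
  of the top of the vertical stick \<open>b\<close>, the horizontal stick \<open>a\<close> meets \<open>b\<close> iff
  \<open>s b \<le> hl a \<le> vx b \<le> hr a\<close>. For a non-edge \<open>a\<^sub>i b\<^sub>i\<close> of a crown \<open>K\<^sub>n\<^sub>,\<^sub>n\<close> minus a perfect
  matching, one of these three inequalities fails, and the two edges \<open>a\<^sub>i b\<^sub>k\<close>, \<open>a\<^sub>k b\<^sub>i\<close> show
  that the same inequality cannot fail for two different indices \<open>i \<noteq> k\<close>. Hence \<open>n \<le> 3\<close>.
  Since the crown is connected, any induced copy in a bipartite graph has its two colour
  classes on the two sides, so a copy of the crown with \<open>n = 4\<close> rules out a Stick
  representation.\<close>

lemma mem_closed_segment_horizontal:
  "(a, b) \<in> closed_segment (l, y) (r, y) \<longleftrightarrow> b = y \<and> a \<in> closed_segment l r"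
  by (auto simp: in_segment algebra_simps)

lemma mem_closed_segment_vertical:
  "(a, b) \<in> closed_segment (x, l) (x, r) \<longleftrightarrow> a = x \<and> b \<in> closed_segment l r"
  by (auto simp: in_segment algebra_simps)

lemma hseg_vseg_intersect_iff:
  assumes "l \<le> r" and "c - x \<le> t"
  shows "hseg c l r \<inter> vseg c x t \<noteq> {} \<longleftrightarrow> c - t \<le> l \<and> l \<le> x \<and> x \<le> r"
proof
  assume "hseg c l r \<inter> vseg c x t \<noteq> {}"
  then obtain a b where "(a, b) \<in> hseg c l r" "(a, b) \<in> vseg c x t" by auto
  then show "c - t \<le> l \<and> l \<le> x \<and> x \<le> r"
    using assms by (auto simp: hseg_def vseg_def mem_closed_segment_horizontal
        mem_closed_segment_vertical closed_segment_eq_real_ivl split: if_splits)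
next
  assume "c - t \<le> l \<and> l \<le> x \<and> x \<le> r"
  then have "(x, c - l) \<in> hseg c l r \<inter> vseg c x t"
    using assms by (auto simp: hseg_def vseg_def mem_closed_segment_horizontal
        mem_closed_segment_vertical closed_segment_eq_real_ivl)
  then show "hseg c l r \<inter> vseg c x t \<noteq> {}" by blast
qed

lemma interval_crown_le_3:
  fixes s l x r :: "nat \<Rightarrow> real"
  assumes crown: "\<And>i j. i < n \<Longrightarrow> j < n \<Longrightarrow> (s j \<le> l i \<and> l i \<le> x j \<and> x j \<le> r i) \<longleftrightarrow> i \<noteq> j"
  shows "n \<le> 3"
proof -
  define failure :: "nat \<Rightarrow> nat" where
    "failure i = (if x i < l i then 0 else if r i < x i then 1 else 2)" for i
  have failing: "x i < l i \<or> r i < x i \<or> l i < s i" if "i < n" for i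
    using crown[of i i] that by auto
  have "i = k" if "i < n" "k < n" "failure i = failure k" for i k
  proof (rule ccontr)
    assume "i \<noteq> k"
    then have "s k \<le> l i" "l i \<le> x k" "x k \<le> r i" "s i \<le> l k" "l k \<le> x i" "x i \<le> r k"
      using crown[of i k] crown[of k i] \<open>i < n\<close> \<open>k < n\<close> by auto
    then show False
      using that failing[of i] failing[of k] by (auto simp: failure_def split: if_splits)
  qed
  then have "inj_on failure {..<n}"
    by (auto intro: inj_onI)
  moreover have "failure ` {..<n} \<subseteq> {..<3}"
    by (auto simp: failure_def)
  ultimately have "card {..<n} \<le> card {..<3::nat}"
    by (intro card_inj_on_le) auto
  then show ?thesis by simp
qed

lemma stick_representation_crown_le_3:
  fixes a b :: "nat \<Rightarrow> 'v"
  assumes "stick_representation A B E"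
    and "\<And>i. i < n \<Longrightarrow> a i \<in> A" and "\<And>j. j < n \<Longrightarrow> b j \<in> B"
    and "\<And>i j. i < n \<Longrightarrow> j < n \<Longrightarrow> E (a i) (b j) \<longleftrightarrow> i \<noteq> j"
  shows "n \<le> 3"
proof -
  obtain c hl hr vx vt where
    hor: "\<forall>a\<in>A. hl a \<le> hr a" and ver: "\<forall>b\<in>B. c - vx b \<le> vt b" and
    rep: "\<forall>a\<in>A. \<forall>b\<in>B. hseg c (hl a) (hr a) \<inter> vseg c (vx b) (vt b) \<noteq> {} \<longleftrightarrow> E a b"
    using assms(1) unfolding stick_representation_def by blast
  show ?thesis
  proof (rule interval_crown_le_3[of n "\<lambda>j. c - vt (b j)" "\<lambda>i. hl (a i)" "\<lambda>j. vx (b j)" "\<lambda>i. hr (a i)"])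
    fix i j assume ij: "i < n" "j < n"
    then have "E (a i) (b j) \<longleftrightarrow> c - vt (b j) \<le> hl (a i) \<and> hl (a i) \<le> vx (b j) \<and> vx (b j) \<le> hr (a i)"
      using rep hor ver assms(2,3) by (auto simp flip: hseg_vseg_intersect_iff)
    then show "(c - vt (b j) \<le> hl (a i) \<and> hl (a i) \<le> vx (b j) \<and> vx (b j) \<le> hr (a i)) \<longleftrightarrow> i \<noteq> j"
      using assms(4) ij by simp
  qed
qed

lemma bipartite_graph_swap: "bipartite_graph A B E \<Longrightarrow> bipartite_graph B A E"
  unfolding bipartite_graph_def by blast

lemma bipartite_graph_adj_sides: "bipartite_graph A B E \<Longrightarrow> E u v \<Longrightarrow> u \<in> A \<longleftrightarrow> v \<in> B"
  unfolding bipartite_graph_def by blast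

lemma bipartite_graph_crown_sides:
  fixes u w :: "nat \<Rightarrow> 'v"
  assumes G: "bipartite_graph A B E" and "3 \<le> n" and "u 0 \<in> A"
    and crown: "\<And>i j. i < n \<Longrightarrow> j < n \<Longrightarrow> E (u i) (w j) \<longleftrightarrow> i \<noteq> j"
  shows "\<forall>i<n. u i \<in> A" and "\<forall>j<n. w j \<in> B"
proof -
  have adj: "E (u i) (w j)" if "i < n" "j < n" "i \<noteq> j" for i j
    using crown that by simp
  have w_nonzero: "w j \<in> B" if "j < n" "j \<noteq> 0" for j
    using bipartite_graph_adj_sides[OF G adj[of 0 j]] \<open>u 0 \<in> A\<close> \<open>3 \<le> n\<close> that by simp
  show u: "\<forall>i<n. u i \<in> A"
  proof (intro allI impI)
    fix i assume "i < n"
    define j where "j = (if i = 1 then 2 else 1 :: nat)"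
    have "j < n" "j \<noteq> 0" "i \<noteq> j" using \<open>3 \<le> n\<close> by (auto simp: j_def)
    then show "u i \<in> A"
      using bipartite_graph_adj_sides[OF G adj[of i j]] w_nonzero[of j] \<open>i < n\<close> by simp
  qed
  show "\<forall>j<n. w j \<in> B"
  proof (intro allI impI)
    fix j assume "j < n"
    define i where "i = (if j = 0 then 1 else 0 :: nat)"
    have "i < n" "i \<noteq> j" using \<open>3 \<le> n\<close> by (auto simp: i_def)
    then show "w j \<in> B"
      using bipartite_graph_adj_sides[OF G adj[of i j]] u \<open>j < n\<close> by simp
  qed
qed

lemma bipartite_graph_induced_H_crown:
  assumes G: "bipartite_graph A B E" and "contains_induced_H (A \<union> B) E"
  obtains a b :: "nat \<Rightarrow> 'v"
  where "\<And>i. i < (4::nat) \<Longrightarrow> a i \<in> A" and "\<And>j. j < 4 \<Longrightarrow> b j \<in> B"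
    and "\<And>i j. i < 4 \<Longrightarrow> j < 4 \<Longrightarrow> E (a i) (b j) \<longleftrightarrow> i \<noteq> j"
proof -
  obtain f where f: "\<forall>u\<in>H_verts. \<forall>v\<in>H_verts. E (f u) (f v) \<longleftrightarrow> H_adj u v"
    using assms(2) unfolding contains_induced_H_def by blast
  define u w where "u i = f (Inl i)" and "w j = f (Inr j)" for i j :: nat
  have crown: "E (u i) (w j) \<longleftrightarrow> i \<noteq> j" if "i < 4" "j < 4" for i j
    using f that by (auto simp: u_def w_def H_verts_def H_adj_def)
  have E_sym: "E v v' \<longleftrightarrow> E v' v" for v v'
    using G unfolding bipartite_graph_def by blast
  show thesis
  proof (cases "u 0 \<in> A")
    case True
    show thesis
      by (rule that[of u w])
        (use bipartite_graph_crown_sides[where n = 4, OF G _ True crown] crown in auto)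
  next
    case False
    have "E (u 0) (w 1)" using crown by simp
    then have "u 0 \<in> B"
      using G False unfolding bipartite_graph_def by blast
    show thesis
      by (rule that[of w u])
        (use bipartite_graph_crown_sides[where n = 4, OF bipartite_graph_swap[OF G] _ \<open>u 0 \<in> B\<close> crown]
          crown in \<open>auto simp: E_sym\<close>)
  qed
qed

theorem mainTheorem10:
  fixes A B :: "'v set" and E :: "'v \<Rightarrow> 'v \<Rightarrow> bool"
  assumes "bipartite_graph A B E"
    and "contains_induced_H (A \<union> B) E"
  shows "\<not> stick_representation A B E"
proof
  assume stick: "stick_representation A B E"
  obtain a b :: "nat \<Rightarrow> 'v" where "\<And>i. i < 4 \<Longrightarrow> a i \<in> A" "\<And>j. j < 4 \<Longrightarrow> b j \<in> B"
    "\<And>i j. i < 4 \<Longrightarrow> j < 4 \<Longrightarrow> E (a i) (b j) \<longleftrightarrow> i \<noteq> j"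
    using bipartite_graph_induced_H_crown[OF assms] by blast
  then have "(4::nat) \<le> 3"
    by (rule stick_representation_crown_le_3[OF stick])
  then show False by simp
qed

end
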